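(* Let $\Omega\subset\mathbb{R}^d$ be a bounded domain and $\mathcal{S}=\{(a_1,a_2,a_3)\in\mathbb{R}^3: a_i\ge0,\ a_1a_2a_3=0\}$. For $\mathbf v=(v_1,v_2,v_3)\in L^2(\Omega)^3$ define $\mathcal{P}\mathbf v$ pointwise by: at $x\in\Omega$, let $k^*(x)$ be the index $k\in\{1,2,3\}$ minimizing $(v_k(x))^+=\max\{v_k(x),0\}$, ties broken by choosing the smallest index, and set $(\mathcal P\mathbf v)_i(x)=(v_i(x))^+$ if $i\ne k^*(x)$ and $(\mathcal P\mathbf v)_{k^*(x)}(x)=0$. Then $\mathcal P\mathbf v\in L^2(\Omega)^3$, $\mathcal P\mathbf v(x)\in\mathcal S$ for a.e. $x\in\Omega$, and $$\|\mathbf v-\mathcal P\mathbf v\|_{L^2(\Omega)^3}^2=\min\big\{\|\mathbf v-\mathbf w\|_{L^2(\Omega)^3}^2:\ \mathbf w\in L^2(\Omega)^3,\ \mathbf w(x)\in\mathcal S\text{ a.e.}\big\}.$$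
   Context: $\|\mathbf v\|_{L^2(\Omega)^3}^2=\int_\Omega\sum_{i=1}^3|v_i(x)|^2\,dx$. *)

theory Defs
  imports "HOL-Analysis.Analysis"
begin

text \<open>Vector-valued functions v = (v_1,v_2,v_3) are represented as v :: nat => 'a => real,
  with components v 1, v 2, v 3 (other indices are irrelevant).\<close>

definition L2 :: "'a::euclidean_space set \<Rightarrow> ('a \<Rightarrow> real) \<Rightarrow> bool" where
  "L2 \<Omega> f \<longleftrightarrow> f \<in> borel_measurable (lebesgue_on \<Omega>) \<and>
                  integrable (lebesgue_on \<Omega>) (\<lambda>x. (f x)\<^sup>2)"

definition L2vec :: "'a::euclidean_space set \<Rightarrow> (nat \<Rightarrow> 'a \<Rightarrow> real) \<Rightarrow> bool" where
  "L2vec \<Omega> v \<longleftrightarrow> (\<forall>i\<in>{1,2,3}. L2 \<Omega> (v i))"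

definition L2norm_sq :: "'a::euclidean_space set \<Rightarrow> (nat \<Rightarrow> 'a \<Rightarrow> real) \<Rightarrow> real" where
  "L2norm_sq \<Omega> v = (\<Sum>i\<in>{1,2,3}. integral\<^sup>L (lebesgue_on \<Omega>) (\<lambda>x. (v i x)\<^sup>2))"

definition Sset :: "(nat \<Rightarrow> real) set" where
  "Sset = {a. (\<forall>i\<in>{1,2,3}. a i \<ge> 0) \<and> a 1 * a 2 * a 3 = 0}"

definition kstar :: "(nat \<Rightarrow> 'a \<Rightarrow> real) \<Rightarrow> 'a \<Rightarrow> nat" where
  "kstar v x = (LEAST k. k \<in> {1,2,3} \<and> (\<forall>j\<in>{1,2,3}. max (v k x) 0 \<le> max (v j x) 0))"

definition Pproj :: "(nat \<Rightarrow> 'a \<Rightarrow> real) \<Rightarrow> nat \<Rightarrow> 'a \<Rightarrow> real" where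
  "Pproj v i x = (if i = kstar v x then 0 else max (v i x) 0)"

end

theory Submission
  imports Defs
begin

text \<open>Everything happens pointwise. Writing
  \<open>t = min t 0 + max t 0\<close>, the squared distance from \<open>v(x)\<close> to any \<open>a \<in> S\<close> is at least
  \<open>\<Sum>\<^sub>i (min (v\<^sub>i x) 0)\<^sup>2 + (max (v\<^sub>k x) 0)\<^sup>2\<close> for an index \<open>k\<close> with \<open>a\<^sub>k = 0\<close>; this bound is
  smallest for \<open>k = k*(x)\<close>, where \<open>\<P>v(x)\<close> attains it. \<open>\<P>v\<close> is measurable and dominated by \<open>v\<close>,
  hence in \<open>L\<^sup>2\<close>, and integrating the pointwise inequality gives minimality.\<close>

lemma power2_eq_min_max_zero: "(t::real)\<^sup>2 = (min t 0)\<^sup>2 + (max t 0)\<^sup>2"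
  by (simp add: min_def max_def)

lemma power2_min_zero_le_dist:
  fixes s t :: real
  assumes "0 \<le> s"
  shows "(min t 0)\<^sup>2 \<le> (t - s)\<^sup>2"
proof (cases "t \<ge> 0")
  case False
  then have "(- t)\<^sup>2 \<le> (s - t)\<^sup>2"
    using assms by (intro power_mono) auto
  with False show ?thesis by (simp add: min_def power2_commute)
qed simp

lemma kstar_eq:
  "kstar v x = (if max (v 1 x) 0 \<le> max (v 2 x) 0 \<and> max (v 1 x) 0 \<le> max (v 3 x) 0 then 1
     else if max (v 2 x) 0 \<le> max (v 3 x) 0 then 2 else 3)"
  unfolding kstar_def by (rule Least_equality) auto

lemma kstar_in: "kstar v x \<in> {1,2,3}"
  unfolding kstar_eq by auto

lemma kstar_le: "j \<in> {1,2,3} \<Longrightarrow> max (v (kstar v x) x) 0 \<le> max (v j x) 0"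
  unfolding kstar_eq by auto

lemma Pproj_in_Sset: "(\<lambda>i. Pproj v i x) \<in> Sset"
  using kstar_in[of v x] unfolding Sset_def Pproj_def by auto

lemma Pproj_power2_le: "(Pproj v i x)\<^sup>2 \<le> (v i x)\<^sup>2"
  unfolding Pproj_def by (auto simp: max_def power2_eq_square mult_mono)

lemma Pproj_dist_le:
  assumes "a \<in> Sset"
  shows "(\<Sum>i\<in>{1,2,3}. (v i x - Pproj v i x)\<^sup>2) \<le> (\<Sum>i\<in>{1,2,3}. (v i x - a i)\<^sup>2)"
proof -
  define k where "k = kstar v x"
  define n where "n i = (min (v i x) 0)\<^sup>2" for i
  define p where "p i = (max (v i x) 0)\<^sup>2" for i
  have a_nonneg: "0 \<le> a i" if "i \<in> {1,2,3}" for i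
    using assms that unfolding Sset_def by auto
  obtain j where j: "j \<in> {1,2,3}" "a j = 0"
    using assms unfolding Sset_def by auto
  have Pproj_dist: "(v i x - Pproj v i x)\<^sup>2 = n i + (if i = k then p i else 0)" for i
  proof (cases "i = k")
    case True
    then show ?thesis
      using power2_eq_min_max_zero[of "v i x"] by (simp add: Pproj_def n_def p_def k_def)
  next
    case False
    then show ?thesis
      by (simp add: Pproj_def n_def k_def min_def max_def)
  qed
  have dist_ge: "n i \<le> (v i x - a i)\<^sup>2" if "i \<in> {1,2,3}" for i
    unfolding n_def by (rule power2_min_zero_le_dist[OF a_nonneg[OF that]])
  have dist_j: "(v j x - a j)\<^sup>2 = n j + p j"
    unfolding n_def p_def using j(2) power2_eq_min_max_zero[of "v j x"] by simp
  have "p k \<le> p j"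
    unfolding p_def k_def using kstar_le[OF j(1)] by (intro power_mono) auto
  have "(\<Sum>i\<in>{1,2,3}. (v i x - Pproj v i x)\<^sup>2) = n 1 + n 2 + n 3 + p k"
    using kstar_in[of v x] unfolding Pproj_dist k_def by auto
  also have "\<dots> \<le> n 1 + n 2 + n 3 + p j"
    using \<open>p k \<le> p j\<close> by simp
  also have "\<dots> \<le> (\<Sum>i\<in>{1,2,3}. (v i x - a i)\<^sup>2)"
    using j(1) dist_j dist_ge[of 1] dist_ge[of 2] dist_ge[of 3] by auto
  finally show ?thesis .
qed

lemma Pproj_measurable:
  assumes "\<And>j. j \<in> {1,2,3} \<Longrightarrow> v j \<in> borel_measurable M" and "i \<in> {1,2,3}"
  shows "Pproj v i \<in> borel_measurable M"
proof -
  have [measurable]: "v 1 \<in> borel_measurable M" "v 2 \<in> borel_measurable M"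
    "v 3 \<in> borel_measurable M" "v i \<in> borel_measurable M"
    using assms by auto
  show ?thesis
    unfolding Pproj_def[abs_def] kstar_eq by measurable
qed

lemma L2_dominated:
  assumes "L2 \<Omega> f" and "g \<in> borel_measurable (lebesgue_on \<Omega>)" and "\<And>x. (g x)\<^sup>2 \<le> (f x)\<^sup>2"
  shows "L2 \<Omega> g"
  unfolding L2_def
proof
  show "integrable (lebesgue_on \<Omega>) (\<lambda>x. (g x)\<^sup>2)"
  proof (rule Bochner_Integration.integrable_bound)
    show "integrable (lebesgue_on \<Omega>) (\<lambda>x. (f x)\<^sup>2)"
      using assms(1) unfolding L2_def by simp
    show "(\<lambda>x. (g x)\<^sup>2) \<in> borel_measurable (lebesgue_on \<Omega>)"
      using assms(2) by measurable
    show "AE x in lebesgue_on \<Omega>. norm ((g x)\<^sup>2) \<le> norm ((f x)\<^sup>2)"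
      using assms(3) by simp
  qed
qed (fact assms(2))

lemma L2_diff:
  assumes "L2 \<Omega> f" and "L2 \<Omega> g"
  shows "L2 \<Omega> (\<lambda>x. f x - g x)"
  unfolding L2_def
proof
  have [measurable]: "f \<in> borel_measurable (lebesgue_on \<Omega>)" "g \<in> borel_measurable (lebesgue_on \<Omega>)"
    using assms unfolding L2_def by simp_all
  show "(\<lambda>x. f x - g x) \<in> borel_measurable (lebesgue_on \<Omega>)"
    by measurable
  show "integrable (lebesgue_on \<Omega>) (\<lambda>x. (f x - g x)\<^sup>2)"
  proof (rule Bochner_Integration.integrable_bound)
    show "integrable (lebesgue_on \<Omega>) (\<lambda>x. 2 * (f x)\<^sup>2 + 2 * (g x)\<^sup>2)"
      using assms unfolding L2_def by simp
    show "(\<lambda>x. (f x - g x)\<^sup>2) \<in> borel_measurable (lebesgue_on \<Omega>)"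
      by measurable
    have "(a - b)\<^sup>2 \<le> 2 * a\<^sup>2 + 2 * b\<^sup>2" for a b :: real
      using zero_le_power2[of "a + b"] by (simp add: power2_eq_square algebra_simps)
    then show "AE x in lebesgue_on \<Omega>. norm ((f x - g x)\<^sup>2) \<le> norm (2 * (f x)\<^sup>2 + 2 * (g x)\<^sup>2)"
      by simp
  qed
qed

lemma L2vec_diff: "L2vec \<Omega> v \<Longrightarrow> L2vec \<Omega> w \<Longrightarrow> L2vec \<Omega> (\<lambda>i x. v i x - w i x)"
  unfolding L2vec_def by (simp add: L2_diff)

lemma L2norm_sq_eq_integral_sum:
  assumes "L2vec \<Omega> u"
  shows "L2norm_sq \<Omega> u = integral\<^sup>L (lebesgue_on \<Omega>) (\<lambda>x. \<Sum>i\<in>{1,2,3}. (u i x)\<^sup>2)"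
  using assms unfolding L2norm_sq_def L2vec_def L2_def
  by (subst Bochner_Integration.integral_sum) auto

lemma L2norm_sq_mono_AE:
  assumes "L2vec \<Omega> u" and "L2vec \<Omega> u'"
    and "AE x in lebesgue_on \<Omega>. (\<Sum>i\<in>{1,2,3}. (u i x)\<^sup>2) \<le> (\<Sum>i\<in>{1,2,3}. (u' i x)\<^sup>2)"
  shows "L2norm_sq \<Omega> u \<le> L2norm_sq \<Omega> u'"
  unfolding L2norm_sq_eq_integral_sum[OF assms(1)] L2norm_sq_eq_integral_sum[OF assms(2)]
proof (rule integral_mono_AE)
  show "integrable (lebesgue_on \<Omega>) (\<lambda>x. \<Sum>i\<in>{1,2,3}. (u i x)\<^sup>2)"
    using assms(1) unfolding L2vec_def L2_def by (intro Bochner_Integration.integrable_sum) auto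
  show "integrable (lebesgue_on \<Omega>) (\<lambda>x. \<Sum>i\<in>{1,2,3}. (u' i x)\<^sup>2)"
    using assms(2) unfolding L2vec_def L2_def by (intro Bochner_Integration.integrable_sum) auto
qed (fact assms(3))

lemma L2vec_Pproj:
  assumes "L2vec \<Omega> v"
  shows "L2vec \<Omega> (Pproj v)"
  unfolding L2vec_def
proof
  fix i :: nat
  assume i: "i \<in> {1,2,3}"
  have v: "L2 \<Omega> (v j)" if "j \<in> {1,2,3}" for j
    using assms that unfolding L2vec_def by blast
  have "Pproj v i \<in> borel_measurable (lebesgue_on \<Omega>)"
    by (rule Pproj_measurable[OF _ i]) (use v in \<open>simp add: L2_def\<close>)
  then show "L2 \<Omega> (Pproj v i)"
    by (rule L2_dominated[OF v[OF i]]) (rule Pproj_power2_le)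
qed

theorem lemma3p13:
  fixes \<Omega> :: "'a::euclidean_space set" and v :: "nat \<Rightarrow> 'a \<Rightarrow> real"
  assumes "open \<Omega>" and "connected \<Omega>" and "bounded \<Omega>" and "\<Omega> \<noteq> {}"
    and "L2vec \<Omega> v"
  shows "L2vec \<Omega> (Pproj v)
    \<and> (AE x in lebesgue_on \<Omega>. (\<lambda>i. Pproj v i x) \<in> Sset)
    \<and> (\<forall>w. L2vec \<Omega> w \<and> (AE x in lebesgue_on \<Omega>. (\<lambda>i. w i x) \<in> Sset) \<longrightarrow>
          L2norm_sq \<Omega> (\<lambda>i x. v i x - Pproj v i x) \<le> L2norm_sq \<Omega> (\<lambda>i x. v i x - w i x))"
proof (intro conjI allI impI)
  show P_L2: "L2vec \<Omega> (Pproj v)"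
    using assms(5) by (rule L2vec_Pproj)
  show "AE x in lebesgue_on \<Omega>. (\<lambda>i. Pproj v i x) \<in> Sset"
    by (simp add: Pproj_in_Sset)
  fix w
  assume w: "L2vec \<Omega> w \<and> (AE x in lebesgue_on \<Omega>. (\<lambda>i. w i x) \<in> Sset)"
  show "L2norm_sq \<Omega> (\<lambda>i x. v i x - Pproj v i x) \<le> L2norm_sq \<Omega> (\<lambda>i x. v i x - w i x)"
  proof (rule L2norm_sq_mono_AE)
    show "L2vec \<Omega> (\<lambda>i x. v i x - Pproj v i x)" "L2vec \<Omega> (\<lambda>i x. v i x - w i x)"
      using assms(5) P_L2 w by (simp_all add: L2vec_diff)
    show "AE x in lebesgue_on \<Omega>. (\<Sum>i\<in>{1,2,3}. (v i x - Pproj v i x)\<^sup>2) \<le> (\<Sum>i\<in>{1,2,3}. (v i x - w i x)\<^sup>2)"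
      using conjunct2[OF w] by eventually_elim (rule Pproj_dist_le)
  qed
qed

end
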